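(* Let $D_n=\sum_{k=0}^n\binom{n}{k}^2\binom{2k}{k}\binom{2(n-k)}{n-k}$ for $n\ge 0$ (the Domb numbers). Then the ratio sequence $\{D_{n+1}/D_n\}_{n\ge 0}$ is ratio log-convex, i.e. the sequence $\{y_n\}_{n\ge0}$ with $y_n=\frac{D_{n+2}D_n}{D_{n+1}^2}$ satisfies $y_{n-1}y_{n+1}\ge y_n^2$ for all $n\ge 1$.
   Context: A sequence $\{x_n\}$ of positive numbers is log-convex if $x_{n-1}x_{n+1}\ge x_n^2$ for all $n\ge1$; it is called ratio log-convex if $\{x_{n+1}/x_n\}$ is log-convex. *)

theory Defs
  imports Complex_Main
begin

definition domb :: "nat \<Rightarrow> nat" where
  "domb n = (\<Sum>k=0..n. (n choose k)^2 * ((2*k) choose k) * ((2*(n-k)) choose (n-k)))"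

definition log_convex :: "(nat \<Rightarrow> real) \<Rightarrow> bool" where
  "log_convex x \<longleftrightarrow> (\<forall>n\<ge>1. x (n-1) * x (n+1) \<ge> (x n)^2)"

definition ratio_log_convex :: "(nat \<Rightarrow> real) \<Rightarrow> bool" where
  "ratio_log_convex x \<longleftrightarrow> log_convex (\<lambda>n. x (n+1) / x n)"

end

theory Submission
  imports Defs
begin

text \<open>
  Zeilberger's algorithm yields the recurrence
  \<open>(n+2)\<^sup>3 D(n+2) = 2(2n+3)(5n\<^sup>2+15n+12) D(n+1) - 64(n+1)\<^sup>3 D(n)\<close>,
  certified by a rational function that makes the recurrence operator applied to the summand
  telescope in \<open>k\<close>. For the ratios \<open>r(n) = D(n+1)/D(n)\<close> it becomes
  \<open>r(n+1) = (A - 64(n+1)\<^sup>3/r(n))/(n+2)\<^sup>3\<close>, with \<open>A\<close> the middle coefficient, a map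
  increasing in \<open>r(n)\<close> which keeps \<open>r(n)\<close> between \<open>(16n-8)/(n+1)\<close> and \<open>32n/(2n+3)\<close> for \<open>n \<ge> 2\<close>.
  Ratio log-convexity is \<open>r(n-1) r(n+1)\<^sup>3 \<le> r(n)\<^sup>3 r(n+2)\<close>; expressing the three
  outer ratios through \<open>r(n)\<close> turns it into the nonnegativity of a polynomial in \<open>n\<close> and
  \<open>r(n)\<close> on that strip, which is witnessed by a Bernstein expansion with nonnegative
  coefficients.
\<close>

section \<open>The recurrence of the Domb numbers\<close>

definition domb_summand :: "nat \<Rightarrow> nat \<Rightarrow> real" where
  "domb_summand n k = real ((n choose k)^2 * ((2*k) choose k) * ((2*(n-k)) choose (n-k)))"

lemma domb_summand_eq_0: "n < k \<Longrightarrow> domb_summand n k = 0"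
  by (simp add: domb_summand_def)

lemma domb_summand_pos: "k \<le> n \<Longrightarrow> domb_summand n k > 0"
  by (simp add: domb_summand_def)

lemma domb_summand_sym: "k \<le> n \<Longrightarrow> domb_summand n (n - k) = domb_summand n k"
  unfolding domb_summand_def using binomial_symmetric[of k n] by (simp add: mult.commute)

lemma fact_add_eq_choose: "fact (a + b) = real (a + b choose a) * fact a * fact b"
  using binomial_fact[of a "a + b", where 'a=real] by (simp add: field_simps)

lemma domb_summand_fact:
  "domb_summand (k + m) k = fact (k+m)^2 * fact (2*k) * fact (2*m) / (fact k^4 * fact m^4)"
proof -
  have "fact (k+m)^2 * fact (2*k) * fact (2*m) = domb_summand (k + m) k * (fact k^4 * fact m^4)"
    unfolding fact_add_eq_choose[of k m] mult_2 fact_add_eq_choose[of k k] fact_add_eq_choose[of m m]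
    by (simp add: domb_summand_def mult_2) algebra
  then show ?thesis by simp
qed

lemma domb_summand_Suc:
  "real (m+1)^4 * domb_summand (k+m+1) k
     = real (k+m+1)^2 * (2*real m+2) * (2*real m+1) * domb_summand (k+m) k"
proof -
  define K M where "K = real k" and "M = real m"
  define fn fk fm f2k f2m :: real where "fn = fact (k+m)" and "fk = fact k" and "fm = fact m"
    and "f2k = fact (2*k)" and "f2m = fact (2*m)"
  have nz: "fk \<noteq> 0" "fm \<noteq> 0" "M + 1 \<noteq> 0"
    unfolding fk_def fm_def M_def by simp_all
  have "fact (k+m+1) = (K+M+1) * fn" "fact (m+1) = (M+1) * fm"
    "fact (2*(m+1)) = (2*M+2) * (2*M+1) * f2m"
    unfolding K_def M_def fn_def fm_def f2m_def by (simp_all add: algebra_simps eval_nat_numeral)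
  then have Suc_eq: "domb_summand (k+m+1) k
      = ((K+M+1)*fn)^2 * f2k * ((2*M+2)*(2*M+1)*f2m) / (fk^4 * ((M+1)^4 * fm^4))"
    using domb_summand_fact[of k "m+1"] unfolding fk_def f2k_def
    by (simp add: add.assoc power_mult_distrib)
  have eq: "domb_summand (k+m) k = fn^2 * f2k * f2m / (fk^4 * fm^4)"
    unfolding domb_summand_fact fn_def fk_def fm_def f2k_def f2m_def ..
  have r: "real (m+1) = M + 1" "real (k+m+1) = K + M + 1"
    unfolding K_def M_def by simp_all
  show ?thesis
    unfolding Suc_eq eq r M_def[symmetric] using nz by (simp add: field_simps) algebra
qed

lemma domb_summand_Suc_Suc:
  "real (k+1)^4 * domb_summand (k+m+1) (k+1)
     = real (k+m+1)^2 * (2*real k+2) * (2*real k+1) * domb_summand (k+m) k"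
  using domb_summand_Suc[where k=m and m=k]
    domb_summand_sym[of "k+1" "k+m+1"] domb_summand_sym[of k "k+m"]
  by (simp add: add.commute add.left_commute)

definition domb_rec_coeff :: "real \<Rightarrow> real" where
  "domb_rec_coeff t = 2*(2*t+1)*(5*t^2+5*t+2)"

definition domb_rec_summand :: "nat \<Rightarrow> nat \<Rightarrow> real" where
  "domb_rec_summand n k = (real n+2)^3 * domb_summand (n+2) k
     - domb_rec_coeff (real n+1) * domb_summand (n+1) k + 64*(real n+1)^3 * domb_summand n k"

definition domb_cert_poly :: "real \<Rightarrow> real \<Rightarrow> real" where
  "domb_cert_poly n k =
       (-112 + 372*k - 356*k^2 + 128*k^3 - 16*k^4)
     + (-712 + 1820*k - 1402*k^2 + 408*k^3 - 40*k^4) * n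
     + (-1844 + 3625*k - 2168*k^2 + 476*k^3 - 32*k^4) * n^2
     + (-2542 + 3758*k - 1642*k^2 + 240*k^3 - 8*k^4) * n^3
     + (-2024 + 2137*k - 608*k^2 + 44*k^3) * n^4
     + (-934 + 632*k - 88*k^2) * n^5
     + (-232 + 76*k) * n^6
     - 24 * n^7"

text \<open>Zeilberger's certificate: \<open>domb_rec_summand n k = domb_cert n (k+1) - domb_cert n k\<close>
  for \<open>k \<le> n + 2\<close>.\<close>

definition domb_cert :: "nat \<Rightarrow> nat \<Rightarrow> real" where
  "domb_cert n k = domb_summand (n+2) k * real k^3 * domb_cert_poly (real n) (real k) /
     ((real n+1)^2 * (real n+2)^3 * (2*real n-2*real k+1) * (2*real n-2*real k+3))"

lemma domb_cert_identity:
  fixes K M :: real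
  shows "((K+M+2)^3*(K+M+2)^2*(K+M+1)^2*(2*M+4)*(2*M+3)*(2*M+2)*(2*M+1)*(K+1)^4
          - domb_rec_coeff (K+M+1)*(K+M+1)^2*(2*M+2)*(2*M+1)*(K+1)^4*(M+2)^4
          + 64*(K+M+1)^3*(K+1)^4*(M+1)^4*(M+2)^4)
         * ((K+M+1)^2*(K+M+2)^3*(2*M+1)) * (2*M-1) * (2*M+3)
       = ((K+M+2)^2*(K+M+1)^2*(2*K+2)*(2*K+1)*(2*M+2)*(2*M+1)*(M+2)^4*(K+1)^3
           * domb_cert_poly (K+M) (K+1)) * (2*M+3)
         - ((K+M+2)^2*(K+M+1)^2*(2*M+4)*(2*M+3)*(2*M+2)*(2*M+1)*(K+1)^4*K^3
           * domb_cert_poly (K+M) K) * (2*M-1)"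
  unfolding domb_rec_coeff_def domb_cert_poly_def by algebra

text \<open>Dividing out \<open>B\<close> reduces the telescoping identity to \<open>domb_cert_identity\<close>.\<close>

lemma domb_summand_common_factor:
  fixes k m :: nat
  defines "K \<equiv> real k" and "M \<equiv> real m"
  obtains B where
    "domb_summand (k+m) k = B * ((K+1)^4*(M+1)^4*(M+2)^4)"
    "domb_summand (k+m+1) k = B * ((K+M+1)^2*(2*M+2)*(2*M+1)*(K+1)^4*(M+2)^4)"
    "domb_summand (k+m+2) k = B * ((K+M+2)^2*(K+M+1)^2*(2*M+4)*(2*M+3)*(2*M+2)*(2*M+1)*(K+1)^4)"
    "domb_summand (k+m+2) (k+1) = B * ((K+M+2)^2*(K+M+1)^2*(2*K+2)*(2*K+1)*(2*M+2)*(2*M+1)*(M+2)^4)"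
proof -
  have nz: "K+1 \<noteq> 0" "M+1 \<noteq> 0" "M+2 \<noteq> 0" unfolding K_def M_def by simp_all
  define B where "B = domb_summand (k+m) k / ((K+1)^4*(M+1)^4*(M+2)^4)"
  have e0: "domb_summand (k+m) k = B * ((K+1)^4*(M+1)^4*(M+2)^4)"
    using nz by (simp add: B_def)
  have "(M+1)^4 * domb_summand (k+m+1) k = (K+M+1)^2*(2*M+2)*(2*M+1) * domb_summand (k+m) k"
    using domb_summand_Suc[where k=k and m=m] unfolding K_def M_def by (simp add: add_ac)
  also have "\<dots> = (M+1)^4 * (B * ((K+M+1)^2*(2*M+2)*(2*M+1)*(K+1)^4*(M+2)^4))"
    unfolding e0 by algebra
  finally have e1: "domb_summand (k+m+1) k = B * ((K+M+1)^2*(2*M+2)*(2*M+1)*(K+1)^4*(M+2)^4)"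
    using nz by simp
  have "(M+2)^4 * domb_summand (k+m+2) k = (K+M+2)^2*(2*M+4)*(2*M+3) * domb_summand (k+m+1) k"
    using domb_summand_Suc[where k=k and m="m+1"] unfolding K_def M_def
    by (simp add: algebra_simps)
  also have "\<dots> = (M+2)^4 * (B * ((K+M+2)^2*(K+M+1)^2*(2*M+4)*(2*M+3)*(2*M+2)*(2*M+1)*(K+1)^4))"
    unfolding e1 by algebra
  finally have e2: "domb_summand (k+m+2) k
      = B * ((K+M+2)^2*(K+M+1)^2*(2*M+4)*(2*M+3)*(2*M+2)*(2*M+1)*(K+1)^4)"
    using nz by simp
  have "(K+1)^4 * domb_summand (k+m+2) (k+1) = (K+M+2)^2*(2*K+2)*(2*K+1) * domb_summand (k+m+1) k"
    using domb_summand_Suc_Suc[where k=k and m="m+1"] unfolding K_def M_def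
    by (simp add: algebra_simps)
  also have "\<dots> = (K+1)^4 * (B * ((K+M+2)^2*(K+M+1)^2*(2*K+2)*(2*K+1)*(2*M+2)*(2*M+1)*(M+2)^4))"
    unfolding e1 by algebra
  finally have "domb_summand (k+m+2) (k+1)
      = B * ((K+M+2)^2*(K+M+1)^2*(2*K+2)*(2*K+1)*(2*M+2)*(2*M+1)*(M+2)^4)"
    using nz by simp
  with e0 e1 e2 show thesis by (rule that)
qed

lemma domb_rec_summand_telescopes:
  assumes "k \<le> n"
  shows "domb_rec_summand n k = domb_cert n (k+1) - domb_cert n k"
proof -
  obtain m where n: "n = k + m" using assms le_Suc_ex by blast
  define K M where "K = real k" and "M = real m"
  obtain B where e0: "domb_summand n k = B * ((K+1)^4*(M+1)^4*(M+2)^4)"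
    and e1: "domb_summand (n+1) k = B * ((K+M+1)^2*(2*M+2)*(2*M+1)*(K+1)^4*(M+2)^4)"
    and e2: "domb_summand (n+2) k
      = B * ((K+M+2)^2*(K+M+1)^2*(2*M+4)*(2*M+3)*(2*M+2)*(2*M+1)*(K+1)^4)"
    and e3: "domb_summand (n+2) (k+1)
      = B * ((K+M+2)^2*(K+M+1)^2*(2*K+2)*(2*K+1)*(2*M+2)*(2*M+1)*(M+2)^4)"
    using domb_summand_common_factor[of k m] unfolding n K_def M_def by blast
  have "K \<ge> 0" "M \<ge> 0" unfolding K_def M_def by simp_all
  then have nz: "K+M+1 \<noteq> 0" "K+M+2 \<noteq> 0" "2*M+3 \<noteq> 0" by linarith+
  have "2*M - 1 \<noteq> 0"
  proof
    assume "2*M - 1 = 0"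
    then have "2*m = 1" unfolding M_def by linarith
    then show False by presburger
  qed
  define E where "E = (K+M+1)^2*(K+M+2)^3*(2*M+1)"
  define T where "T = (K+M+2)^3*(K+M+2)^2*(K+M+1)^2*(2*M+4)*(2*M+3)*(2*M+2)*(2*M+1)*(K+1)^4
          - domb_rec_coeff (K+M+1)*(K+M+1)^2*(2*M+2)*(2*M+1)*(K+1)^4*(M+2)^4
          + 64*(K+M+1)^3*(K+1)^4*(M+1)^4*(M+2)^4"
  define P1 where "P1 = (K+M+2)^2*(K+M+1)^2*(2*K+2)*(2*K+1)*(2*M+2)*(2*M+1)*(M+2)^4*(K+1)^3
           * domb_cert_poly (K+M) (K+1)"
  define P0 where "P0 = (K+M+2)^2*(K+M+1)^2*(2*M+4)*(2*M+3)*(2*M+2)*(2*M+1)*(K+1)^4*K^3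
           * domb_cert_poly (K+M) K"
  have r: "real n = K + M" "real (k+1) = K + 1" unfolding n K_def M_def by simp_all
  have "E \<noteq> 0" unfolding E_def using \<open>M \<ge> 0\<close> nz by simp
  have "domb_cert n (k+1) = B * P1 / (E * (2*M-1))"
    unfolding domb_cert_def e3 r P1_def E_def by (simp add: algebra_simps)
  then have g1: "domb_cert n (k+1) * (E * (2*M-1)) = B * P1"
    using \<open>E \<noteq> 0\<close> \<open>2*M - 1 \<noteq> 0\<close> by simp
  have "domb_cert n k = B * P0 / (E * (2*M+3))"
    unfolding domb_cert_def e2 r P0_def E_def K_def[symmetric] by (simp add: algebra_simps)
  then have g0: "domb_cert n k * (E * (2*M+3)) = B * P0"
    using \<open>E \<noteq> 0\<close> nz by simp
  have "domb_rec_summand n k = B * T"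
    unfolding domb_rec_summand_def e0 e1 e2 r T_def by algebra
  moreover have "T * E * (2*M-1) * (2*M+3) = P1 * (2*M+3) - P0 * (2*M-1)"
    unfolding T_def P1_def P0_def E_def by (rule domb_cert_identity)
  ultimately have "domb_rec_summand n k * (E * (2*M-1) * (2*M+3))
      = (domb_cert n (k+1) - domb_cert n k) * (E * (2*M-1) * (2*M+3))"
    using g0 g1 by algebra
  then show ?thesis using \<open>E \<noteq> 0\<close> \<open>2*M - 1 \<noteq> 0\<close> nz by simp
qed

lemma domb_cert_poly_last: "domb_cert_poly N (N+2) = -3 * (N+1)^2 * (N+2)^3"
  unfolding domb_cert_poly_def by algebra

lemma domb_cert_last: "domb_cert n (n+2) = -((real n+2)^3 * domb_summand (n+2) (n+2))"
proof -
  have "domb_cert_poly (real n) (real (n+2)) = -3 * (real n+1)^2 * (real n+2)^3"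
    unfolding of_nat_add of_nat_numeral by (rule domb_cert_poly_last)
  then show ?thesis
    unfolding domb_cert_def by (simp add: field_simps)
qed

lemma domb_rec_summand_telescopes_last:
  "domb_rec_summand n (n+2) = domb_cert n (n+3) - domb_cert n (n+2)"
  unfolding domb_rec_summand_def domb_cert_last
  by (simp add: domb_summand_eq_0 domb_cert_def)

lemma domb_rec_summand_telescopes_penultimate:
  "domb_rec_summand n (n+1) = domb_cert n (n+2) - domb_cert n (n+1)"
proof -
  define N c where "N = real n" and "c = domb_summand (n+1) (n+1)"
  have "N \<ge> 0" unfolding N_def by simp
  have c1: "domb_summand (n+2) (n+1) = 2 * (N+2)^2 * c"
    using domb_summand_Suc[where k="n+1" and m=0] unfolding N_def c_def
    by (simp add: algebra_simps)
  have "(N+2)^2 * ((N+2)^2 * domb_summand (n+2) (n+2)) = (N+2)^2 * ((2*N+4) * (2*N+3) * c)"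
    using domb_summand_Suc_Suc[where k="n+1" and m=0] unfolding N_def c_def
    by (simp add: algebra_simps eval_nat_numeral)
  then have c2: "(N+2)^2 * domb_summand (n+2) (n+2) = (2*N+4) * (2*N+3) * c"
    by (rule mult_left_cancel[THEN iffD1, rotated]) (use \<open>N \<ge> 0\<close> in simp)
  have r: "real (n+1) = N + 1" unfolding N_def by simp
  have "(N+1)^2 * (N+2)^3 * (2*N - 2*(N+1) + 1) * (2*N - 2*(N+1) + 3)
      = -((N+1)^2 * (N+2)^3)" by algebra
  moreover have "N + 1 \<noteq> 0" "N + 2 \<noteq> 0" using \<open>N \<ge> 0\<close> by linarith+
  ultimately have "(N+2) * domb_cert n (n+1) = -(2 * (N+1) * c * domb_cert_poly N (N+1))"
    unfolding domb_cert_def c1 r N_def[symmetric] by (simp add: field_simps) algebra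
  moreover have "domb_cert n (n+2) = -((N+2) * (2*N+4) * (2*N+3) * c)"
    unfolding domb_cert_last N_def[symmetric] using c2 by algebra
  moreover have "domb_rec_summand n (n+1) = (N+2)^3 * (2 * (N+2)^2 * c) - domb_rec_coeff (N+1) * c"
    unfolding domb_rec_summand_def c1 N_def[symmetric] c_def by (simp add: domb_summand_eq_0)
  ultimately have "(N+2) * domb_rec_summand n (n+1) = (N+2) * (domb_cert n (n+2) - domb_cert n (n+1))"
    unfolding domb_cert_poly_def domb_rec_coeff_def by algebra
  then show ?thesis using \<open>N \<ge> 0\<close> by simp
qed

lemma domb_rec_summand_eq_diff:
  assumes "k \<le> n + 2"
  shows "domb_rec_summand n k = domb_cert n (Suc k) - domb_cert n k"
proof -
  consider "k \<le> n" | "k = n + 1" | "k = n + 2" using assms by linarith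
  then show ?thesis
    using domb_rec_summand_telescopes[of k n] domb_rec_summand_telescopes_penultimate[of n]
      domb_rec_summand_telescopes_last[of n]
    by cases (simp_all add: eval_nat_numeral)
qed

lemma sum_domb_rec_summand: "(\<Sum>k=0..n+2. domb_rec_summand n k) = 0"
proof -
  have "(\<Sum>k=0..n+2. domb_rec_summand n k) = (\<Sum>k=0..n+2. domb_cert n (Suc k) - domb_cert n k)"
    by (rule sum.cong) (simp_all add: domb_rec_summand_eq_diff)
  also have "\<dots> = domb_cert n (Suc (n+2)) - domb_cert n 0"
    by (subst sum_Suc_diff) simp_all
  also have "\<dots> = 0"
    by (simp add: domb_cert_def domb_summand_eq_0)
  finally show ?thesis .
qed

lemma domb_eq_sum_domb_summand:
  assumes "n \<le> N"
  shows "real (domb n) = (\<Sum>k=0..N. domb_summand n k)"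
  using assms
proof (induction N rule: dec_induct)
  case base
  show ?case by (simp add: domb_def domb_summand_def)
next
  case (step N)
  then show ?case by (simp add: domb_summand_eq_0)
qed

theorem domb_recurrence:
  "(real n+2)^3 * real (domb (n+2))
     = domb_rec_coeff (real n+1) * real (domb (n+1)) - 64*(real n+1)^3 * real (domb n)"
proof -
  have "(\<Sum>k=0..n+2. domb_rec_summand n k)
      = (real n+2)^3 * (\<Sum>k=0..n+2. domb_summand (n+2) k)
        - domb_rec_coeff (real n+1) * (\<Sum>k=0..n+2. domb_summand (n+1) k)
        + 64*(real n+1)^3 * (\<Sum>k=0..n+2. domb_summand n k)"
    unfolding domb_rec_summand_def by (simp only: sum.distrib sum_subtractf sum_distrib_left)
  then show ?thesis
    unfolding sum_domb_rec_summand
    using domb_eq_sum_domb_summand[of n "n+2"] domb_eq_sum_domb_summand[of "n+1" "n+2"]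
      domb_eq_sum_domb_summand[of "n+2" "n+2"]
    by simp
qed

lemma domb_pos: "real (domb n) > 0"
proof -
  have "0 < (\<Sum>k=0..n. domb_summand n k)"
    by (rule sum_pos2[of _ 0]) (simp_all add: domb_summand_pos less_imp_le)
  then show ?thesis using domb_eq_sum_domb_summand[of n n] by simp
qed

section \<open>Bounds for the ratios\<close>

lemma domb_small_values:
  "domb 0 = 1" "domb 1 = 4" "domb 2 = 28" "domb 3 = 256" "domb 4 = 2716"
  by (simp_all add: domb_def eval_nat_numeral)

definition domb_ratio :: "nat \<Rightarrow> real" where
  "domb_ratio n = real (domb (n+1)) / real (domb n)"

lemma domb_ratio_pos: "domb_ratio n > 0"
  unfolding domb_ratio_def by (intro divide_pos_pos domb_pos)

lemma domb_ratio_rec: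
  "(real n+2)^3 * domb_ratio (n+1) * domb_ratio n
     = domb_rec_coeff (real n+1) * domb_ratio n - 64*(real n+1)^3"
proof -
  define d0 d1 d2 where "d0 = real (domb n)" and "d1 = real (domb (n+1))"
    and "d2 = real (domb (n+2))"
  have "d0 > 0" "d1 > 0" unfolding d0_def d1_def by (rule domb_pos)+
  have ratios: "domb_ratio n = d1 / d0" "domb_ratio (n+1) = d2 / d1"
    unfolding domb_ratio_def d0_def d1_def d2_def by (simp_all add: eval_nat_numeral)
  have "(real n+2)^3 * domb_ratio (n+1) * domb_ratio n = (real n+2)^3 * d2 / d0"
    unfolding ratios using \<open>d1 > 0\<close> by simp
  also have "\<dots> = (domb_rec_coeff (real n+1) * d1 - 64*(real n+1)^3 * d0) / d0"
    unfolding d0_def d1_def d2_def domb_recurrence ..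
  also have "\<dots> = domb_rec_coeff (real n+1) * domb_ratio n - 64*(real n+1)^3"
    unfolding ratios using \<open>d0 > 0\<close> by (simp add: field_simps)
  finally show ?thesis .
qed

lemma domb_ratio_Suc:
  "domb_ratio (n+1) = (domb_rec_coeff (real n+1) - 64*(real n+1)^3 / domb_ratio n) / (real n+2)^3"
  using domb_ratio_rec[of n] domb_ratio_pos[of n] by (simp add: field_simps)

lemma domb_ratio_map_upper:
  fixes N :: real
  assumes "N \<ge> 2"
  shows "(domb_rec_coeff (N+1) - 64*(N+1)^3 / (32*N/(2*N+3))) / (N+2)^3 \<le> 32*(N+1)/(2*(N+1)+3)"
proof -
  have "(domb_rec_coeff (N+1) - 64*(N+1)^3 / (32*N/(2*N+3))) / (N+2)^3
      = (N * domb_rec_coeff (N+1) - 2*(N+1)^3*(2*N+3)) / (N*(N+2)^3)"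
    using assms by (simp add: field_simps)
  also have "\<dots> \<le> 32*(N+1)/(2*(N+1)+3)"
  proof -
    have "32*(N+1)*(N*(N+2)^3) - (N * domb_rec_coeff (N+1) - 2*(N+1)^3*(2*N+3))*(2*(N+1)+3)
        = 18*N+30"
      unfolding domb_rec_coeff_def by algebra
    then show ?thesis using assms by (simp add: field_simps)
  qed
  finally show ?thesis .
qed

lemma domb_ratio_map_lower:
  fixes N :: real
  assumes "N \<ge> 2"
  shows "(16*(N+1)-8)/((N+1)+1) \<le> (domb_rec_coeff (N+1) - 64*(N+1)^3 / ((16*N-8)/(N+1))) / (N+2)^3"
proof -
  have "(16*(N+1)-8)/((N+1)+1) \<le> ((2*N-1) * domb_rec_coeff (N+1) - 8*(N+1)^4) / ((2*N-1)*(N+2)^3)"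
  proof -
    have "((2*N-1) * domb_rec_coeff (N+1) - 8*(N+1)^4)*(N+2) - (16*(N+1)-8)*((2*N-1)*(N+2)^3)
        = 18*(N-2)^3 + 150*(N-2)^2 + 348*(N-2) + 144"
      unfolding domb_rec_coeff_def by algebra
    moreover have "0 \<le> 18*(N-2)^3 + 150*(N-2)^2 + 348*(N-2) + 144"
      using assms by (intro add_nonneg_nonneg mult_nonneg_nonneg zero_le_power) auto
    ultimately show ?thesis using assms by (simp add: field_simps)
  qed
  also have "\<dots> = (domb_rec_coeff (N+1) - 64*(N+1)^3 / ((16*N-8)/(N+1))) / (N+2)^3"
    using assms by (simp add: field_simps) algebra
  finally show ?thesis .
qed

lemma domb_ratio_bounds:
  assumes "n \<ge> 2"
  shows "(16*real n-8)/(real n+1) \<le> domb_ratio n \<and> domb_ratio n \<le> 32*real n/(2*real n+3)"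
  using assms
proof (induction n rule: nat_induct_at_least)
  case base
  have "domb_ratio 2 = 64/7"
    unfolding domb_ratio_def by (simp add: domb_small_values)
  then show ?case by simp
next
  case (Suc n)
  define N where "N = real n"
  have "N \<ge> 2" unfolding N_def using Suc.hyps by simp
  have lo: "(16*N-8)/(N+1) \<le> domb_ratio n" and up: "domb_ratio n \<le> 32*N/(2*N+3)"
    using Suc.IH unfolding N_def by auto
  have "(16*N-8)/(N+1) > 0" using \<open>N \<ge> 2\<close> by simp
  have step: "domb_ratio (Suc n) = (domb_rec_coeff (N+1) - 64*(N+1)^3 / domb_ratio n) / (N+2)^3"
    using domb_ratio_Suc[of n] unfolding N_def by simp
  have "64*(N+1)^3 / (32*N/(2*N+3)) \<le> 64*(N+1)^3 / domb_ratio n"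
    using up domb_ratio_pos[of n] \<open>N \<ge> 2\<close> by (intro divide_left_mono) auto
  then have "domb_ratio (Suc n) \<le> 32*(N+1)/(2*(N+1)+3)"
    unfolding step using domb_ratio_map_upper[OF \<open>N \<ge> 2\<close>] \<open>N \<ge> 2\<close>
    by (smt (verit) divide_right_mono zero_le_power)
  moreover have "0 < domb_ratio n * ((16*N-8)/(N+1))"
    using domb_ratio_pos \<open>(16*N-8)/(N+1) > 0\<close> by (rule mult_pos_pos)
  then have "64*(N+1)^3 / domb_ratio n \<le> 64*(N+1)^3 / ((16*N-8)/(N+1))"
    using lo \<open>N \<ge> 2\<close> by (intro divide_left_mono) auto
  then have "(16*(N+1)-8)/((N+1)+1) \<le> domb_ratio (Suc n)"
    unfolding step using domb_ratio_map_lower[OF \<open>N \<ge> 2\<close>] \<open>N \<ge> 2\<close>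
    by (smt (verit) divide_right_mono zero_le_power)
  ultimately show ?case unfolding N_def by (simp add: add.commute)
qed

section \<open>A polynomial inequality\<close>

fun horner :: "real list \<Rightarrow> real \<Rightarrow> real" where
  "horner [] x = 0"
| "horner (c # cs) x = c + x * horner cs x"

lemma horner_nonneg: "\<forall>c\<in>set cs. 0 \<le> c \<Longrightarrow> 0 \<le> x \<Longrightarrow> 0 \<le> horner cs x"
  by (induction cs) auto

definition bernstein_form :: "real list list \<Rightarrow> real \<Rightarrow> real \<Rightarrow> real" where
  "bernstein_form css x s =
     (\<Sum>i<length css. horner (css ! i) x * s^i * (1 - s)^(length css - 1 - i))"

lemma bernstein_form_nonneg:
  assumes "\<forall>cs\<in>set css. \<forall>c\<in>set cs. 0 \<le> c" and "0 \<le> x" and "0 \<le> s" "s \<le> 1"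
  shows "0 \<le> bernstein_form css x s"
  unfolding bernstein_form_def using assms
  by (intro sum_nonneg mult_nonneg_nonneg zero_le_power horner_nonneg) auto

text \<open>
  For four consecutive ratios \<open>a, x, b, c\<close> the recurrence expresses \<open>a\<close>, \<open>b\<close> and \<open>c\<close>
  through \<open>x\<close>, and \<open>ratio_gap_poly N x 1\<close> becomes a positive multiple of
  \<open>x\<^sup>3 c - a b\<^sup>3\<close>. The third argument \<open>d\<close> homogenises the polynomial.
\<close>

definition ratio_gap_poly :: "real \<Rightarrow> real \<Rightarrow> real \<Rightarrow> real" where
  "ratio_gap_poly n x d =
     x^6 * (n+2)^9
       * (domb_rec_coeff (n+2) * (domb_rec_coeff (n+1) * x - 64*(n+1)^3*d) - 64*(n+2)^6*x)
       * (domb_rec_coeff n * d - (n+1)^3*x)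
     - 64*n^3*(n+3)^3 * (domb_rec_coeff (n+1) * x - 64*(n+1)^3*d)^4 * d^4"

lemma ratio_gap_poly_scale: "d^8 * ratio_gap_poly n x 1 = ratio_gap_poly n (d*x) d"
  unfolding ratio_gap_poly_def by simp algebra

definition ratio_gap_coeffs :: "real list list" where
  "ratio_gap_coeffs =
   [[230008463347353901162158882816, 2699300544247575825508227612672,
      15203397616437206489174705700864, 54749744825742511606598738116608,
      141689433783256487354181391220736, 280813475771884087939564585353216,
      443509171814436572499034798817280, 573506495919947671101669302599680,
      619082296283776186775108981882880, 565965133073341899242415669116928,
      443012786712616768290213467258880, 299422746216144689587769982320640,
      175879037063733133994177247313920, 90231142058758169106197111635968,
      40580045112007167744281640173568, 16040119187247554987286369140736,
      5581363426247445257847186653184, 1710841393931411767105733787648,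
      461874694596682053126167986176, 109696368802059058282588274688,
      22871574068953818043307261952, 4172941292125999100508241920, 663262924161427883088150528,
      91288128329173706125344768, 10793873930626483982696448, 1084989442651911182352384,
      91433359802602327375872, 6338575188384452444160, 351994392670390714368,
      15053901329288134656, 465484294932922368, 9262285952385024, 89060441849856],
    [2021427026609447466673517887488, 23321402730148649286542781579264,
      129239189248948006408184112611328, 458296039674777672131189510504448,
      1168876694603012535835244900646912, 2284900666017757676741466418839552,
      3562158123538566279633639063945216, 4550339389484918824890667131469824,
      4855922506211391551271892873641984, 4391800191792237790720887927865344,
      3403285263201182960827059620806656, 2278680976490038493873499386413056,
      1326797623642440350789770992943104, 675152848297814355789349946130432,
      301345487620076632317390495940608, 118278694886052816464219530592256,
      40889858418059753493792471121920, 12458938855008349910736052420608,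
      3345044109777940545404701507584, 790456902062496407917562953728,
      164053105801896905882770341888, 29807148985988601187487711232,
      4719922445668496567307337728, 647456120439385033159999488, 76329366916582484289257472,
      7652893880112559404613632, 643509804232630509502464, 44530173432210432983040,
      2469282107619362734080, 105490831681561559040, 3259557745879154688, 64836001666695168,
      623423092948992],
    [7656171611091379372947759169536, 86847033731030515603419200225280,
      473578274665643245605585527242752, 1653822619039706135685080505384960,
      4157191106776580934756297338781696, 8015366930740695986674843791654912,
      12334511073241492581503538353405952, 15564077431610429593438917419335680,
      16418361724104935386347100667117568, 14688438911357212712976068219240448,
      11266565119180254318934288383344640, 7471546089497629689807523081617408,
      4311494007624632124215545835814912, 2175568523219873628433496722636800,
      963438151233583145644626511134720, 375392146923738384255178311204864,
      128894858540993544202610188222464, 39026152286762452977053916463104,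
      10416863007393028736112346005504, 2448345340081250767073005535232,
      505628293249748898956697403392, 91455080017490509147391655936,
      14422703777201597344357810176, 1971184556621138734545371136, 231628521980098930915934208,
      23157207695810210417344512, 1942457870041875430244352, 134141249503490444623872,
      7426190303688847785984, 316864865664661192704, 9782720539939307520, 194508005000085504,
      1870269278846976],
    [16273797912960879363651734077440, 181507654173650062180686520909824,
      973943571289314838711670308601856, 3349403272220432154240769396310016,
      8297410575957348448998178947072000, 15777905663753124293610226348720128,
      23962994454635826005561596780216320, 29863132405880038885754878870683648,
      31133184725907278537906782589681664, 27544133818651182808043868401958912,
      20906043275380921174088671089917952, 13726949017675286637080403221938176,
      7847307007486245980185809691607040, 3924924149731545723136366312685568,
      1723753754780438849348770254028800, 666420547935690899006287748530176,
      227154887981479943431950591590400, 68307833271621514757614690369536,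
      18116717052521400430661216501760, 4232900339728761242463649136640,
      869383181680188140731288780800, 156455777997673656872551317504,
      24559673476468301678864498688, 3342592549028288855355162624, 391306864298251595915722752,
      38991666465174674271633408, 3261301966487171937337344, 224673899106882425978880,
      12413901781592067538944, 528900203115309957120, 16312731092417249280, 324180008333475840,
      3117115464744960],
    [21137701574607751549586830786560, 231786866960330469127263092736000,
      1223704681287239560325925489868800, 4143572710101799147751119748333568,
      10113959233953582335704224686407680, 18962484700450352709196904059109376,
      28414475338782229143430592741769216, 34959153829182368733674409427992576,
      36003053100234210543775434173054976, 31483821849857100825985192959148032,
      23632762489774761373568794858881024, 15354397265235364884254744962400256,
      8689964768601941000313200613261312, 4305081225867852005201573937414144,
      1873633594531396549557507034447872, 718153833530197978295983908323328,
      242798514275207796172416928972800, 72450372112982492484105085648896,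
      19075884227125312243798351282176, 4426558369349403215574702489600,
      903339088889621068200762408960, 161596933997599130760983347200,
      25226686259373220392452751360, 3415989352420178498735308800, 398063148589703296702218240,
      39502241469350740827832320, 3292149741097124490117120, 226106559922508943851520,
      12461920632377966592000, 529934046411117035520, 16323467823462481920, 324180008333475840,
      3117115464744960],
    [17059214951930458254407173668864, 183863828039114308716377866764288,
      954745696739708553435350078324736, 3181814959832063958665520627056640,
      7648612271831591350548788378861568, 14131165488877082487997880390909952,
      20878086074333945640765857822932992, 25340473759379343112038906838646784,
      25758365658189642443848787234390016, 22243467676236378770817971317112832,
      16495514972328479497922059979194368, 10592808015128122518238321321181184,
      5927961451599085632972167162363904, 2905043476955094680984469437939712,
      1251149229959751469838953806299136, 474744933430231214614372675485696,
      158953620108441082425184811483136, 46990454755814042396428024676352,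
      12262065036777233057722839072768, 2821141912082924331848341389312,
      571039844903015351889357176832, 101366054012821027140082335744,
      15709523963641756674183659520, 2112894022680437598034329600, 244683489010645642726342656,
      24144578126427875992141824, 2002161701157949692444672, 136916379113184590561280,
      7519283010232331010048, 318870833370073399296, 9803570578936823808, 194508005000085504,
      1870269278846976],
    [8255758365980358402797324992512, 87404847050312366211427819585536,
      446080757169776191059187269107712, 1461890354858648248598539467227136,
      3457376117395362420817847421763584, 6287222985949398521379233036500992,
      9146702593978524815977777006116864, 10935575351259248753291281601396736,
      10953251187358520209753367598071808, 9322999085446013592602667481300992,
      6816555557823824397296646091702272, 4316801992440541052483924675002368,
      2382892523304772467687093958606848, 1152094508669465610948013203652608,
      489625369235854241255992326094848, 183364328513976902332061784735744,
      60604627037392968758266278445056, 17689336911400840284401678942208,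
      4558550017119428595604556611584, 1035995432992757866421412691968,
      207203567332602172223225069568, 36355910293386998018186674176,
      5571641923862275775898058752, 741414030496271261912530944, 85000623965439761942839296,
      8309901865883003856617472, 683310085547065589366784, 46383563122622123212800,
      2531569762252829491200, 106835495919424634880, 3273560026458882048, 64836001666695168,
      623423092948992],
    [2142751624593867204122885750784, 22253934220232211274066129059840,
      111447089103436627948161076297728, 358470496421580104540308289617920,
      832223271191265098335188997373952, 1485763407771599112498366853939200,
      2122108078664164176178704436690944, 2490823029985506390855265214791680,
      2449065111332901529732227237150720, 2045966552900465382588554680467456,
      1467895921190526980356921393938432, 911915576821435077279919430959104,
      493637704204182619148441106776064, 233953078764952822908471805476864,
      97419507741822330870188910575616, 35729422014249688342417870159872,
      11559060672128299294811423244288, 3300704536131068797872116858880,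
      831723402486616062646800089088, 184741584957027837201805737984,
      36098658550547133705851240448, 6186472090369992673305034752, 925958548772185864434352128,
      120360180775026272042483712, 13485608676025870269284352, 1289607459300607820562432,
      103869668616578009137152, 6919617563859376668672, 371586325520867917824,
      15478244647888748544, 469917525816115200, 9262285952385024, 89060441849856],
    [217550463692050289047633920000, 2208765932767382328844165840896,
      10808424524295914118739597983744, 33949323651811506176380247212032,
      76906906157824157729734376030208, 133847122046433992426992963682304,
      186148546811461812135757011222528, 212455473803780780671445351006208,
      202789692591227491977472719716352, 164143259534535007518935394287616,
      113843478535899038207555904995328, 68185492711128363379009492353024,
      35473450334723590913921264910336, 16098153933197975441488176218112,
      6390819989223857874965373124608, 2223170111062102620698025394176,
      678063900267241168430671331328, 181228713497775797998385627136,
      42377655328738430808829722624, 8645227605738912079650226176,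
      1532267394721574785275396096, 234587486250640846356480000, 30783549952219388993077248,
      3426805056375557273419776, 319160435637119656919040, 24405457319851204804608,
      1492084005662311317504, 70121479130862059520, 2378133974594617344, 51803490342666240,
      544258255749120]]"

text \<open>
  With \<open>n = m + 2\<close> and \<open>d = (n+1)(2n+3)\<close>, the substitution \<open>d x = (16n-8)(2n+3) + 24 s\<close>
  maps the strip of \<open>domb_ratio_bounds\<close> onto \<open>0 \<le> s \<le> 1\<close>.
\<close>

lemma ratio_gap_poly_bernstein:
  "ratio_gap_poly (m+2) ((16*(m+2)-8)*(2*(m+2)+3) + 24*s) ((m+2+1)*(2*(m+2)+3))
     = bernstein_form ratio_gap_coeffs m s"
  unfolding ratio_gap_poly_def domb_rec_coeff_def bernstein_form_def ratio_gap_coeffs_def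
  by (simp add: lessThan_nat_numeral del: One_nat_def) algebra

lemma ratio_gap_poly_nonneg:
  fixes n x :: real
  assumes "n \<ge> 2" and "(16*n-8)/(n+1) \<le> x" and "x \<le> 32*n/(2*n+3)"
  shows "0 \<le> ratio_gap_poly n x 1"
proof -
  define d where "d = (n+1)*(2*n+3)"
  define s where "s = (d*x - (16*n-8)*(2*n+3))/24"
  have "d > 0" using assms(1) unfolding d_def by simp
  have "16*n-8 \<le> x*(n+1)" "x*(2*n+3) \<le> 32*n"
    using assms by (simp_all add: divide_le_eq le_divide_eq)
  then have "(16*n-8)*(2*n+3) \<le> x*(n+1)*(2*n+3)" "x*(2*n+3)*(n+1) \<le> 32*n*(n+1)"
    using assms(1) by (simp_all add: mult_right_mono)
  then have "(16*n-8)*(2*n+3) \<le> d*x" "d*x \<le> 32*n*(n+1)"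
    unfolding d_def by (simp_all add: algebra_simps)
  then have "0 \<le> s" "s \<le> 1" unfolding s_def by (simp_all add: algebra_simps)
  have "d^8 * ratio_gap_poly n x 1 = ratio_gap_poly n (d*x) d"
    by (rule ratio_gap_poly_scale)
  also have "\<dots> = bernstein_form ratio_gap_coeffs (n-2) s"
  proof -
    have "d*x = (16*((n-2)+2)-8)*(2*((n-2)+2)+3) + 24*s" "d = ((n-2)+2+1)*(2*((n-2)+2)+3)"
      unfolding s_def d_def by (simp_all add: field_simps)
    then show ?thesis using ratio_gap_poly_bernstein[of "n-2" s] by simp
  qed
  also have "\<dots> \<ge> 0"
    using assms(1) \<open>0 \<le> s\<close> \<open>s \<le> 1\<close>
    by (intro bernstein_form_nonneg) (simp_all add: ratio_gap_coeffs_def)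
  finally show ?thesis using \<open>d > 0\<close> by (simp add: zero_le_mult_iff)
qed

section \<open>Ratio log-convexity\<close>

lemma cubic_ineq_of_ratio_gap_poly:
  fixes N a x b c :: real
  assumes "N \<ge> 2" and "a > 0" "x > 0" "b > 0"
    and rec_a: "(N+1)^3 * x * a = domb_rec_coeff N * a - 64*N^3"
    and rec_x: "(N+2)^3 * b * x = domb_rec_coeff (N+1) * x - 64*(N+1)^3"
    and rec_b: "(N+3)^3 * c * b = domb_rec_coeff (N+2) * b - 64*(N+2)^3"
    and gap: "0 \<le> ratio_gap_poly N x 1"
  shows "a * b^3 \<le> x^3 * c"
proof -
  define W where "W = domb_rec_coeff N - (N+1)^3 * x"
  have aW: "a * W = 64*N^3" unfolding W_def using rec_a by (simp add: algebra_simps)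
  then have "a * W > 0" using \<open>N \<ge> 2\<close> by simp
  then have "W > 0" using \<open>a > 0\<close> by (simp add: zero_less_mult_iff)
  define p where "p = (N+2)^3 * b * x"
  define D where "D = (N+3)^3 * b * (N+2)^3 * x * W * (N+2)^9 * x^3"
  have "D > 0" unfolding D_def using \<open>N \<ge> 2\<close> \<open>b > 0\<close> \<open>x > 0\<close> \<open>W > 0\<close> by simp
  have "x^3 * c * D = ((N+3)^3 * c * b) * (x^7 * (N+2)^12 * W)"
    unfolding D_def by algebra
  also have "\<dots> = x^6 * (N+2)^9 * (domb_rec_coeff (N+2) * p - 64*(N+2)^6 * x) * W"
    unfolding rec_b p_def by algebra
  finally have rhs:
    "x^3 * c * D = x^6 * (N+2)^9 * (domb_rec_coeff (N+2) * p - 64*(N+2)^6 * x) * W" .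
  have "a * b^3 * D = (a * W) * (N+3)^3 * p^4"
    unfolding D_def p_def by algebra
  then have lhs: "a * b^3 * D = 64*N^3*(N+3)^3 * p^4"
    unfolding aW by simp
  have "p = domb_rec_coeff (N+1) * x - 64*(N+1)^3" unfolding p_def using rec_x by simp
  then have "ratio_gap_poly N x 1 = x^3 * c * D - a * b^3 * D"
    unfolding lhs rhs ratio_gap_poly_def W_def by simp
  then show ?thesis using gap \<open>D > 0\<close> by simp
qed

lemma domb_ratio_cubic_ineq:
  "domb_ratio j * domb_ratio (j+2)^3 \<le> domb_ratio (j+1)^3 * domb_ratio (j+3)"
proof (cases "j = 0")
  case True
  \<comment> \<open>\<open>domb_ratio_bounds\<close> fails at \<open>n = 1\<close>, where \<open>domb_ratio 1 = 7 > 32/5\<close>.\<close>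
  have r: "domb_ratio 0 = 4" "domb_ratio 1 = 7" "domb_ratio 2 = 64/7" "domb_ratio 3 = 679/64"
    unfolding domb_ratio_def using domb_small_values by (simp_all add: eval_nat_numeral)
  show ?thesis unfolding True by (simp only: add_0 r) (simp add: power_divide)
next
  case False
  define N where "N = real j + 1"
  have "N \<ge> 2" unfolding N_def using False by simp
  have rec: "(N+1)^3 * domb_ratio (j+1) * domb_ratio j = domb_rec_coeff N * domb_ratio j - 64*N^3"
    "(N+2)^3 * domb_ratio (j+2) * domb_ratio (j+1)
       = domb_rec_coeff (N+1) * domb_ratio (j+1) - 64*(N+1)^3"
    "(N+3)^3 * domb_ratio (j+3) * domb_ratio (j+2)
       = domb_rec_coeff (N+2) * domb_ratio (j+2) - 64*(N+2)^3"
    using domb_ratio_rec[of j] domb_ratio_rec[of "j+1"] domb_ratio_rec[of "j+2"]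
    unfolding N_def by (simp_all add: algebra_simps eval_nat_numeral)
  have "(16*N-8)/(N+1) \<le> domb_ratio (j+1)" "domb_ratio (j+1) \<le> 32*N/(2*N+3)"
    using domb_ratio_bounds[of "j+1"] False unfolding N_def by (auto simp: algebra_simps)
  then have "0 \<le> ratio_gap_poly N (domb_ratio (j+1)) 1"
    by (intro ratio_gap_poly_nonneg \<open>N \<ge> 2\<close>)
  with \<open>N \<ge> 2\<close> show ?thesis
    using cubic_ineq_of_ratio_gap_poly[OF _ domb_ratio_pos domb_ratio_pos domb_ratio_pos rec]
    by (simp add: mult.commute)
qed

lemma ratio_log_convexI:
  assumes pos: "\<And>n. x n > 0"
    and cubic: "\<And>n. x n * x (n+2)^3 \<le> x (n+1)^3 * x (n+3)"
  shows "ratio_log_convex x"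
  unfolding ratio_log_convex_def log_convex_def
proof (intro allI impI)
  fix n :: nat
  assume "n \<ge> 1"
  then obtain j where j: "n = j + 1" by (metis add.commute le_Suc_ex)
  have "x j > 0" "x (j+1) > 0" "x (j+2) > 0" by (fact pos)+
  then have "(x (j+2) / x (j+1))^2 = x j * x (j+2)^3 / (x j * x (j+2) * x (j+1)^2)"
    by (simp add: field_simps power2_eq_square power3_eq_cube)
  also have "\<dots> \<le> x (j+1)^3 * x (j+3) / (x j * x (j+2) * x (j+1)^2)"
    using cubic[of j] \<open>x j > 0\<close> \<open>x (j+1) > 0\<close> \<open>x (j+2) > 0\<close> by (intro divide_right_mono) auto
  also have "\<dots> = (x (j+1) / x j) * (x (j+3) / x (j+2))"
    using \<open>x j > 0\<close> \<open>x (j+1) > 0\<close> \<open>x (j+2) > 0\<close>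
    by (simp add: field_simps power2_eq_square power3_eq_cube)
  finally show "(x (n+1) / x n)^2 \<le> x (n-1+1) / x (n-1) * (x (n+1+1) / x (n+1))"
    unfolding j by (simp add: eval_nat_numeral)
qed

theorem proposition2p15:
  shows "ratio_log_convex (\<lambda>n. real (domb (n+1)) / real (domb n))"
proof -
  have "ratio_log_convex domb_ratio"
    using domb_ratio_pos domb_ratio_cubic_ineq by (rule ratio_log_convexI)
  then show ?thesis unfolding domb_ratio_def .
qed

end
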